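(* Let $w$ be a good word with word polynomial $p_w$ and let $z\in\mathbb{C}\setminus\{0\}$ be such that $\Gamma_z$ is discrete. Then $\Gamma_{p_w(z)}$ is also discrete.
   Context: $\Gamma_z=\langle \pm\begin{pmatrix}1&1\\0&1\end{pmatrix},\pm\begin{pmatrix}1&0\\ z&1\end{pmatrix}\rangle\subset PSL(2,\mathbb{C})$. For $x,y\in PSL(2,\mathbb{C})$, $\gamma(x,y)=\operatorname{tr}[x,y]-2$. A good word is a reduced word $w=a^{m_1}ba^{m_2}b\cdots ba^{m_n}$ in $\langle a,b\mid b^2=1\rangle$ with $n\ge3$ and $m_i\ne0$ for $2\le i\le n-1$; its word polynomial $p_w\in\mathbb{Z}[z]$ is the unique polynomial such that for every parabolic $f$ and every order-two elliptic $\phi$ in $PSL(2,\mathbb{C})$, $\gamma(f,w(f,\phi))=p_w(\gamma(f,\phi))$, where $w(f,\phi)$ substitutes $a=f$, $b=\phi$. *)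

theory Defs
  imports "HOL-Analysis.Analysis" "HOL-Computational_Algebra.Polynomial"
begin

text \<open>Elements of PSL(2,C) are represented by matrices in SL(2,C) (type complex^2^2
  with determinant 1); every notion below is invariant under A \<mapsto> -A.\<close>

type_synonym cmat = "complex^2^2"

definition mat2 :: "complex \<Rightarrow> complex \<Rightarrow> complex \<Rightarrow> complex \<Rightarrow> cmat" where
  "mat2 a b c d = vector [vector [a, b], vector [c, d]]"

definition in_SL2 :: "cmat \<Rightarrow> bool" where
  "in_SL2 A \<longleftrightarrow> det A = 1"

definition zpow :: "cmat \<Rightarrow> int \<Rightarrow> cmat" where
  "zpow A m = (if 0 \<le> m then ((\<lambda>X. X ** A) ^^ nat m) (mat 1)
               else ((\<lambda>X. X ** matrix_inv A) ^^ nat (- m)) (mat 1))"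

definition gam :: "cmat \<Rightarrow> cmat \<Rightarrow> complex" where
  "gam x y = trace (x ** y ** matrix_inv x ** matrix_inv y) - 2"

definition parabolic :: "cmat \<Rightarrow> bool" where
  "parabolic A \<longleftrightarrow> in_SL2 A \<and> A \<noteq> mat 1 \<and> A \<noteq> - mat 1 \<and> (trace A)\<^sup>2 = 4"

text \<open>Elliptic element of order two in PSL(2,C): trace 0 (equivalently A^2 = -I in SL(2,C)).\<close>
definition elliptic_order_two :: "cmat \<Rightarrow> bool" where
  "elliptic_order_two A \<longleftrightarrow> in_SL2 A \<and> trace A = 0"

text \<open>A word a^{m_1} b a^{m_2} b \<dots> b a^{m_n} is encoded by the list [m_1,\<dots>,m_n].\<close>
definition good_word :: "int list \<Rightarrow> bool" where
  "good_word ms \<longleftrightarrow> length ms \<ge> 3 \<and> (\<forall>i. 1 \<le> i \<and> i < length ms - 1 \<longrightarrow> ms ! i \<noteq> 0)"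

fun word_eval :: "int list \<Rightarrow> cmat \<Rightarrow> cmat \<Rightarrow> cmat" where
  "word_eval [] f \<phi> = mat 1"
| "word_eval [m] f \<phi> = zpow f m"
| "word_eval (m # m' # ms) f \<phi> = zpow f m ** \<phi> ** word_eval (m' # ms) f \<phi>"

definition is_word_poly :: "int list \<Rightarrow> int poly \<Rightarrow> bool" where
  "is_word_poly w p \<longleftrightarrow>
     (\<forall>f \<phi>. parabolic f \<and> elliptic_order_two \<phi> \<longrightarrow>
        gam f (word_eval w f \<phi>) = poly (map_poly of_int p) (gam f \<phi>))"

inductive_set gen_group :: "cmat set \<Rightarrow> cmat set" for S where
  one: "mat 1 \<in> gen_group S"
| mul: "g \<in> gen_group S \<Longrightarrow> s \<in> S \<Longrightarrow> g ** s \<in> gen_group S"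
| mul_inv: "g \<in> gen_group S \<Longrightarrow> s \<in> S \<Longrightarrow> g ** matrix_inv s \<in> gen_group S"

text \<open>Preimage in SL(2,C) of Gamma_z = < \<pm>[1 1;0 1], \<pm>[1 0; z 1] > \<subseteq> PSL(2,C).\<close>
definition Gamma_grp :: "complex \<Rightarrow> cmat set" where
  "Gamma_grp z = gen_group {mat2 1 1 0 1, mat2 1 0 z 1, - mat 1}"

text \<open>Discrete subset (every point isolated).  The preimage in SL(2,C) of a subgroup of
  PSL(2,C) is discrete iff the subgroup is discrete in PSL(2,C) (2-fold covering).\<close>
definition discrete_set :: "cmat set \<Rightarrow> bool" where
  "discrete_set G \<longleftrightarrow> (\<forall>g\<in>G. \<exists>e>0. \<forall>h\<in>G. h \<noteq> g \<longrightarrow> e \<le> dist h g)"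

end

theory Submission
  imports Defs
begin

text \<open>Choose c with c^2 = z and put f = [1 1; 0 1], \<phi> = [0 -1/c; c 0]. Then \<phi> is an
  order-two elliptic with \<gamma>(f,\<phi>) = z, and both f and \<phi> normalise \<Gamma>_z (conjugation by \<phi>
  swaps the two parabolic generators up to inversion). Hence W = w(f,\<phi>) normalises \<Gamma>_z, and
  writing W = [a b; c' d] we get p_w(z) = \<gamma>(f,W) = c'^2. The element W f^-1 W^-1 of \<Gamma>_z is
  the conjugate of [1 0; c'^2 1] by the translation [1 a/c'; 0 1], which fixes f, so this
  translation conjugates \<Gamma>_{p_w(z)} into \<Gamma>_z, and discreteness passes to it. Goodness of w
  only matters for the existence of p_w, which is assumed here.\<close>

lemma mat2_nth [simp]:
  "mat2 a b c d $ 1 $ 1 = a" "mat2 a b c d $ 1 $ 2 = b"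
  "mat2 a b c d $ 2 $ 1 = c" "mat2 a b c d $ 2 $ 2 = d"
  by (simp_all add: mat2_def)

lemma cmat_eq_iff:
  "(A::cmat) = B \<longleftrightarrow> A$1$1 = B$1$1 \<and> A$1$2 = B$1$2 \<and> A$2$1 = B$2$1 \<and> A$2$2 = B$2$2"
  by (auto simp: vec_eq_iff forall_2)

lemma cmat_cases:
  obtains a b c d where "(A::cmat) = mat2 a b c d"
  by (metis cmat_eq_iff mat2_nth)

lemma mat2_eq_iff [simp]:
  "mat2 a b c d = mat2 a' b' c' d' \<longleftrightarrow> a = a' \<and> b = b' \<and> c = c' \<and> d = d'"
  by (simp add: cmat_eq_iff)

lemma mat2_mult [simp]:
  "mat2 a b c d ** mat2 e f g h = mat2 (a*e + b*g) (a*f + b*h) (c*e + d*g) (c*f + d*h)"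
  by (simp add: cmat_eq_iff matrix_matrix_mult_def sum_2)

lemma mat1_eq_mat2: "(mat 1 :: cmat) = mat2 1 0 0 1"
  by (simp add: cmat_eq_iff mat_def)

lemma uminus_mat2 [simp]: "- mat2 a b c d = mat2 (-a) (-b) (-c) (-d)"
  by (simp add: cmat_eq_iff)

lemma det_mat2 [simp]: "det (mat2 a b c d) = a*d - b*c"
  by (simp add: det_2)

lemma trace_mat2 [simp]: "trace (mat2 a b c d) = a + d"
  by (simp add: trace_def sum_2)

lemma matrix_inv_inverse:
  assumes "invertible A"
  shows "A ** matrix_inv A = mat 1" "matrix_inv A ** A = mat 1"
  using someI_ex[OF assms[unfolded invertible_def]] by (simp_all add: matrix_inv_def)

lemma matrix_inv_unique:
  assumes "A ** B = mat 1" "B ** A = mat 1"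
  shows "matrix_inv A = B"
proof -
  have "invertible A" using assms unfolding invertible_def by blast
  then have "matrix_inv A = (matrix_inv A ** A) ** B"
    using assms(1) by (metis matrix_mul_assoc matrix_mul_rid)
  then show ?thesis using \<open>invertible A\<close> by (simp add: matrix_inv_inverse)
qed

lemma matrix_inv_mult:
  fixes A B :: "'a::semiring_1^'n^'n"
  assumes "invertible A" "invertible B"
  shows "matrix_inv (A ** B) = matrix_inv B ** matrix_inv A"
proof (rule matrix_inv_unique)
  show "A ** B ** (matrix_inv B ** matrix_inv A) = mat 1"
    by (metis assms matrix_inv_inverse(1) matrix_mul_assoc matrix_mul_rid)
  show "matrix_inv B ** matrix_inv A ** (A ** B) = mat 1"
    by (metis assms matrix_inv_inverse(2) matrix_mul_assoc matrix_mul_lid)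
qed

lemma matrix_inv_mat2:
  "a*d - b*c = 1 \<Longrightarrow> matrix_inv (mat2 a b c d) = mat2 d (-b) (-c) a"
  by (rule matrix_inv_unique) (simp_all add: mat1_eq_mat2 algebra_simps)

lemma matrix_inv_mat1: "matrix_inv (mat 1 :: cmat) = mat 1"
  by (rule matrix_inv_unique) simp_all

lemma invertible_SL2: "det (A::cmat) = 1 \<Longrightarrow> invertible A"
  by (simp add: invertible_det_nz)

lemma neg_mat1_commute: "(- mat 1) ** (A::cmat) = A ** (- mat 1)"
  by (simp add: cmat_eq_iff matrix_matrix_mult_def sum_2 mat_def)

lemma gam_translation:
  "a*d - b*c = 1 \<Longrightarrow> gam (mat2 1 1 0 1) (mat2 a b c d) = c\<^sup>2"
  by (simp add: gam_def matrix_inv_mat2 power2_eq_square algebra_simps)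

lemma gen_group_mult:
  assumes "x \<in> gen_group S" "y \<in> gen_group S"
  shows "x ** y \<in> gen_group S"
  using assms(2)
proof induction
  case one
  then show ?case using assms(1) by simp
next
  case (mul g s)
  then show ?case by (metis gen_group.mul matrix_mul_assoc)
next
  case (mul_inv g s)
  then show ?case by (metis gen_group.mul_inv matrix_mul_assoc)
qed

lemma gen_group_generator:
  assumes "s \<in> S"
  shows "s \<in> gen_group S" "matrix_inv s \<in> gen_group S"
  using gen_group.mul[OF gen_group.one assms] gen_group.mul_inv[OF gen_group.one assms] by simp_all

lemma gen_group_conj:
  assumes "x \<in> gen_group S" and "Minv ** M = mat 1" "M ** Minv = mat 1"
    and "\<And>s. s \<in> S \<Longrightarrow> M ** s ** Minv \<in> gen_group T"
    and "\<And>s. s \<in> S \<Longrightarrow> M ** matrix_inv s ** Minv \<in> gen_group T"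
  shows "M ** x ** Minv \<in> gen_group T"
  using assms(1)
proof induction
  case one
  then show ?case using assms(3) by (simp add: gen_group.one)
next
  case (mul g s)
  have "M ** (g ** s) ** Minv = (M ** g ** Minv) ** (M ** s ** Minv)"
    by (metis assms(2) matrix_mul_assoc matrix_mul_lid)
  then show ?case using mul assms(4) by (simp add: gen_group_mult)
next
  case (mul_inv g s)
  have "M ** (g ** matrix_inv s) ** Minv = (M ** g ** Minv) ** (M ** matrix_inv s ** Minv)"
    by (metis assms(2) matrix_mul_assoc matrix_mul_lid)
  then show ?case using mul_inv assms(5) by (simp add: gen_group_mult)
qed

lemma Gamma_grp_generators:
  "mat2 1 1 0 1 \<in> Gamma_grp z" "mat2 1 (-1) 0 1 \<in> Gamma_grp z"
  "mat2 1 0 z 1 \<in> Gamma_grp z" "mat2 1 0 (-z) 1 \<in> Gamma_grp z"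
  "- mat 1 \<in> Gamma_grp z"
proof -
  let ?S = "{mat2 1 1 0 1, mat2 1 0 z 1, - mat 1}"
  have "matrix_inv (mat2 1 1 0 1) = mat2 1 (-1) 0 1" "matrix_inv (mat2 1 0 z 1) = mat2 1 0 (-z) 1"
    by (simp_all add: matrix_inv_mat2)
  then show "mat2 1 1 0 1 \<in> Gamma_grp z" "mat2 1 (-1) 0 1 \<in> Gamma_grp z"
    "mat2 1 0 z 1 \<in> Gamma_grp z" "mat2 1 0 (-z) 1 \<in> Gamma_grp z" "- mat 1 \<in> Gamma_grp z"
    unfolding Gamma_grp_def using gen_group_generator[of _ ?S] by (metis insert_iff)+
qed

lemma Gamma_grp_conj:
  assumes "h \<in> Gamma_grp y" and "Minv ** M = mat 1" "M ** Minv = mat 1"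
    and "M ** mat2 1 1 0 1 ** Minv \<in> Gamma_grp z" "M ** mat2 1 (-1) 0 1 ** Minv \<in> Gamma_grp z"
    and "M ** mat2 1 0 y 1 ** Minv \<in> Gamma_grp z" "M ** mat2 1 0 (-y) 1 ** Minv \<in> Gamma_grp z"
  shows "M ** h ** Minv \<in> Gamma_grp z"
proof -
  have "M ** (- mat 1) ** Minv = - mat 1"
    by (metis assms(3) matrix_mul_assoc matrix_mul_lid neg_mat1_commute)
  then show ?thesis
    using assms Gamma_grp_generators(5)[of z] unfolding Gamma_grp_def
    by (elim gen_group_conj) (auto simp: matrix_inv_mat2 mat1_eq_mat2 simp del: mat2_mult)
qed

definition SL2_normalizer :: "cmat set \<Rightarrow> cmat set" where
  "SL2_normalizer G = {X. det X = 1 \<and> (\<forall>u\<in>G. X ** u ** matrix_inv X \<in> G)}"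

lemma SL2_normalizer_one: "mat 1 \<in> SL2_normalizer G"
  by (simp add: SL2_normalizer_def matrix_inv_mat1)

lemma SL2_normalizer_mult:
  assumes "X \<in> SL2_normalizer G" "Y \<in> SL2_normalizer G"
  shows "X ** Y \<in> SL2_normalizer G"
proof -
  have det: "det X = 1" "det Y = 1" using assms by (auto simp: SL2_normalizer_def)
  have "(X ** Y) ** u ** matrix_inv (X ** Y) = X ** (Y ** u ** matrix_inv Y) ** matrix_inv X" for u
    using det by (simp add: matrix_inv_mult invertible_SL2 matrix_mul_assoc)
  then show ?thesis using assms det by (simp add: SL2_normalizer_def det_mul)
qed

lemma zpow_in_SL2_normalizer:
  assumes "X \<in> SL2_normalizer G" "matrix_inv X \<in> SL2_normalizer G"
  shows "zpow X m \<in> SL2_normalizer G"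
proof -
  have "((\<lambda>Y. Y ** A) ^^ n) (mat 1) \<in> SL2_normalizer G" if "A \<in> SL2_normalizer G" for A n
    using that by (induction n) (simp_all add: SL2_normalizer_one SL2_normalizer_mult)
  then show ?thesis using assms by (simp add: zpow_def)
qed

lemma word_eval_in_SL2_normalizer:
  assumes "f \<in> SL2_normalizer G" "matrix_inv f \<in> SL2_normalizer G" "\<phi> \<in> SL2_normalizer G"
  shows "word_eval w f \<phi> \<in> SL2_normalizer G"
  by (induction w rule: induct_list012)
     (simp_all add: assms SL2_normalizer_one SL2_normalizer_mult zpow_in_SL2_normalizer)

lemma gen_group_SL2_normalizer:
  assumes "x \<in> gen_group S" "matrix_inv x \<in> gen_group S" "det x = 1"
  shows "x \<in> SL2_normalizer (gen_group S)"
  using assms by (simp add: SL2_normalizer_def gen_group_mult)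

lemma translations_normalize_Gamma_grp:
  "mat2 1 1 0 1 \<in> SL2_normalizer (Gamma_grp z)" "mat2 1 (-1) 0 1 \<in> SL2_normalizer (Gamma_grp z)"
  using gen_group_SL2_normalizer Gamma_grp_generators(1,2)[of z]
  by (simp_all add: Gamma_grp_def matrix_inv_mat2)

lemma elliptic_normalizes_Gamma_grp:
  assumes "c\<^sup>2 = z" "c \<noteq> 0"
  shows "mat2 0 (-1/c) c 0 \<in> SL2_normalizer (Gamma_grp z)"
proof -
  let ?\<phi> = "mat2 0 (-1/c) c 0" and ?\<phi>' = "mat2 0 (1/c) (-c) 0"
  have inv: "matrix_inv ?\<phi> = ?\<phi>'" using assms by (simp add: matrix_inv_mat2)
  have "?\<phi> ** h ** ?\<phi>' \<in> Gamma_grp z" if "h \<in> Gamma_grp z" for h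
    using that
  proof (rule Gamma_grp_conj)
    show "?\<phi>' ** ?\<phi> = mat 1" "?\<phi> ** ?\<phi>' = mat 1"
      using assms by (simp_all add: mat1_eq_mat2)
    show "?\<phi> ** mat2 1 1 0 1 ** ?\<phi>' \<in> Gamma_grp z" "?\<phi> ** mat2 1 (-1) 0 1 ** ?\<phi>' \<in> Gamma_grp z"
      "?\<phi> ** mat2 1 0 z 1 ** ?\<phi>' \<in> Gamma_grp z" "?\<phi> ** mat2 1 0 (-z) 1 ** ?\<phi>' \<in> Gamma_grp z"
      using assms(2) Gamma_grp_generators[of z] unfolding assms(1)[symmetric]
      by (simp_all add: field_simps power2_eq_square)
  qed
  then show ?thesis using assms inv by (simp add: SL2_normalizer_def del: mat2_mult)
qed

lemma Gamma_grp_conj_into_by_normalizer: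
  assumes "mat2 a b c d \<in> SL2_normalizer (Gamma_grp z)"
  obtains T Ti where "Ti ** T = mat 1" "T ** Ti = mat 1"
    and "\<And>h. h \<in> Gamma_grp (c\<^sup>2) \<Longrightarrow> T ** h ** Ti \<in> Gamma_grp z"
proof -
  let ?W = "mat2 a b c d" and ?T = "mat2 1 (a/c) 0 1" and ?Ti = "mat2 1 (-a/c) 0 1"
  have det: "a*d - b*c = 1"
    and normal: "\<And>u. u \<in> Gamma_grp z \<Longrightarrow> ?W ** u ** matrix_inv ?W \<in> Gamma_grp z"
    using assms by (auto simp: SL2_normalizer_def)
  have conj_lower: "?T ** mat2 1 0 (e * c\<^sup>2) 1 ** ?Ti = ?W ** mat2 1 (-e) 0 1 ** matrix_inv ?W"
    if "c \<noteq> 0" for e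
    using that det by (simp add: matrix_inv_mat2 field_simps power2_eq_square)
  have lower: "?T ** mat2 1 0 (e * c\<^sup>2) 1 ** ?Ti \<in> Gamma_grp z" if "e = 1 \<or> e = -1" for e
  proof (cases "c = 0")
    case True
    then show ?thesis using gen_group.one by (simp add: Gamma_grp_def mat1_eq_mat2)
  next
    case False
    have "mat2 1 (-e) 0 1 \<in> Gamma_grp z" using that Gamma_grp_generators(1,2) by auto
    then have "?W ** mat2 1 (-e) 0 1 ** matrix_inv ?W \<in> Gamma_grp z" by (rule normal)
    then show ?thesis by (subst conj_lower[OF False])
  qed
  show thesis
  proof
    show "?Ti ** ?T = mat 1" "?T ** ?Ti = mat 1" by (simp_all add: mat1_eq_mat2)
    show "?T ** h ** ?Ti \<in> Gamma_grp z" if "h \<in> Gamma_grp (c\<^sup>2)" for h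
      using that \<open>?Ti ** ?T = mat 1\<close> \<open>?T ** ?Ti = mat 1\<close>
    proof (rule Gamma_grp_conj)
      show "?T ** mat2 1 0 (c\<^sup>2) 1 ** ?Ti \<in> Gamma_grp z"
        "?T ** mat2 1 0 (- c\<^sup>2) 1 ** ?Ti \<in> Gamma_grp z"
        using lower[of 1] lower[of "-1"] by simp_all
      show "?T ** mat2 1 1 0 1 ** ?Ti \<in> Gamma_grp z" "?T ** mat2 1 (-1) 0 1 ** ?Ti \<in> Gamma_grp z"
        using Gamma_grp_generators(1,2) by simp_all
    qed
  qed
qed

lemma discrete_set_bounded_linear_preimage:
  assumes "discrete_set G" "bounded_linear L" "inj L" "\<And>h. h \<in> H \<Longrightarrow> L h \<in> G"
  shows "discrete_set H"
  unfolding discrete_set_def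
proof
  fix g assume g: "g \<in> H"
  obtain K where K: "K > 0" "\<And>x. norm (L x) \<le> norm x * K"
    using bounded_linear.pos_bounded[OF assms(2)] by blast
  obtain e where e: "e > 0" "\<And>h. h \<in> G \<Longrightarrow> h \<noteq> L g \<Longrightarrow> e \<le> dist h (L g)"
    using assms(1,4) g unfolding discrete_set_def by blast
  have "e / K \<le> dist h g" if "h \<in> H" "h \<noteq> g" for h
  proof -
    have "e \<le> dist (L h) (L g)"
      using that assms(3,4) e(2) by (simp add: inj_eq)
    also have "\<dots> = norm (L (h - g))"
      by (simp add: dist_norm linear_diff[OF bounded_linear.linear[OF assms(2)]])
    also have "\<dots> \<le> norm (h - g) * K" by (rule K(2))
    finally show ?thesis using K(1) by (simp add: dist_norm pos_divide_le_eq)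
  qed
  then show "\<exists>e>0. \<forall>h\<in>H. h \<noteq> g \<longrightarrow> e \<le> dist h g" using e(1) K(1) by (meson divide_pos_pos)
qed

lemma discrete_set_conj_subset:
  assumes "discrete_set G" "Ti ** T = mat 1" "T ** Ti = mat 1"
    and "\<And>h. h \<in> H \<Longrightarrow> T ** h ** Ti \<in> G"
  shows "discrete_set H"
proof (rule discrete_set_bounded_linear_preimage)
  have "linear (\<lambda>X::cmat. T ** X ** Ti)"
    by (rule linearI) (simp_all add: cmat_eq_iff matrix_matrix_mult_def sum_2 algebra_simps)
  then show "bounded_linear (\<lambda>X. T ** X ** Ti)" by (simp add: linear_conv_bounded_linear)
  show "inj (\<lambda>X. T ** X ** Ti)"
    by (rule inj_on_inverseI[where g = "\<lambda>Y. Ti ** Y ** T"])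
       (metis assms(2) matrix_mul_assoc matrix_mul_lid matrix_mul_rid)
qed (use assms in auto)

theorem corollary1:
  fixes w :: "int list" and p :: "int poly" and z :: complex
  assumes "good_word w"
    and "is_word_poly w p"
    and "z \<noteq> 0"
    and "discrete_set (Gamma_grp z)"
  shows "discrete_set (Gamma_grp (poly (map_poly of_int p) z))"
proof -
  define c where "c = csqrt z"
  have c: "c\<^sup>2 = z" "c \<noteq> 0" using assms(3) by (auto simp: c_def)
  let ?f = "mat2 1 1 0 1" and ?\<phi> = "mat2 0 (-1/c) c 0"
  have "parabolic ?f"
    by (simp add: parabolic_def in_SL2_def mat1_eq_mat2)
  moreover have "elliptic_order_two ?\<phi>"
    using c by (simp add: elliptic_order_two_def in_SL2_def)
  ultimately have "poly (map_poly of_int p) (gam ?f ?\<phi>) = gam ?f (word_eval w ?f ?\<phi>)"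
    using assms(2) by (simp add: is_word_poly_def)
  moreover have "gam ?f ?\<phi> = z"
    unfolding c(1)[symmetric] by (rule gam_translation) (simp add: c(2))
  moreover have "word_eval w ?f ?\<phi> \<in> SL2_normalizer (Gamma_grp z)"
    using translations_normalize_Gamma_grp elliptic_normalizes_Gamma_grp[OF c]
    by (intro word_eval_in_SL2_normalizer) (simp_all add: matrix_inv_mat2)
  moreover obtain a b c' d where "word_eval w ?f ?\<phi> = mat2 a b c' d"
    using cmat_cases by blast
  ultimately have normal: "mat2 a b c' d \<in> SL2_normalizer (Gamma_grp z)"
    and "poly (map_poly of_int p) z = c'\<^sup>2"
    by (simp_all add: SL2_normalizer_def gam_translation)
  then show ?thesis
    using Gamma_grp_conj_into_by_normalizer[OF normal] discrete_set_conj_subset[OF assms(4)] by metis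
qed

end
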